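(* For every $k\ge 0$ let $a(k)$ be the exponent of the largest power of $2$ dividing $k!$. For every $n\ge1$, let $f(n)$ be the minimum of $\Phi(T)$ over all binary phylogenetic trees $T$ with $n$ leaves. Then for every $n\ge 1$, $$f(n)=\sum_{k=0}^{n-1}a(k).$$
   Context: A phylogenetic tree with $n$ leaves is a rooted tree whose leaves are bijectively labeled by $\{1,\dots,n\}$; binary means every internal node has exactly two children. The depth $\delta_T(v)$ is the number of arcs from the root to $v$; for leaves $i,j$, $\varphi_T(i,j)=\delta_T(LCA_T(i,j))$ ($LCA$ = lowest common ancestor), and $\Phi(T)=\sum_{1\le i<j\le n}\varphi_T(i,j)$ is the total cophenetic index. *)

theory Defs
  imports "HOL-Computational_Algebra.Computational_Algebra"
begin

text \<open>Rooted binary trees with leaves labeled by naturals. Every internal node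
  has exactly two children (the order of children is irrelevant for all
  quantities considered here).\<close>
datatype btree = Leaf nat | Node btree btree

fun leaves :: "btree \<Rightarrow> nat list" where
  "leaves (Leaf a) = [a]"
| "leaves (Node l r) = leaves l @ leaves r"

definition binary_phylo :: "btree \<Rightarrow> nat \<Rightarrow> bool" where
  "binary_phylo t n \<longleftrightarrow> distinct (leaves t) \<and> set (leaves t) = {1..n}"

fun lca_depth :: "btree \<Rightarrow> nat \<Rightarrow> nat \<Rightarrow> nat" where
  "lca_depth (Leaf a) i j = 0"
| "lca_depth (Node l r) i j =
     (if i \<in> set (leaves l) \<and> j \<in> set (leaves l) then Suc (lca_depth l i j)
      else if i \<in> set (leaves r) \<and> j \<in> set (leaves r) then Suc (lca_depth r i j)
      else 0)"

definition total_cophenetic :: "btree \<Rightarrow> nat \<Rightarrow> nat" where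
  "total_cophenetic t n = (\<Sum>(i, j) \<in> {(i, j). 1 \<le> i \<and> i < j \<and> j \<le> n}. lca_depth t i j)"

definition min_cophenetic :: "nat \<Rightarrow> nat" where
  "min_cophenetic n = Min {total_cophenetic t n | t. binary_phylo t n}"

definition two_adic_fact :: "nat \<Rightarrow> nat" where
  "two_adic_fact k = multiplicity (2::nat) (fact k)"

end

theory Submission
  imports Defs
begin

(* Write a(k) for the 2-adic valuation of k! and F(n) = a(0) + ... + a(n-1).
   1. Legendre-type identities a(2m+1) = a(2m) = m + a(m) give the recursion
      F(n) = h(ceil(n/2)) + h(floor(n/2)),  where  h(p) = F(p) + C(p,2).
   2. h has nondecreasing increments h(p+1) - h(p) = a(p) + p, hence is discretely convex:
      h(p) + h(q) >= h(ceil((p+q)/2)) + h(floor((p+q)/2)).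
   3. Summing over pairs of leaves of a tree, the cophenetic index satisfies
      Phi(Node l r) = Phi(l) + Phi(r) + C(|l|,2) + C(|r|,2), since every pair inside a
      subtree gains one unit of depth and pairs split at the root contribute 0.
   4. By induction with 1-3, Phi(T) >= F(#leaves T) for every tree, and the balanced tree
      (split sizes ceil(n/2), floor(n/2)) attains equality by the same recursions. *)

section \<open>The 2-adic valuation of factorials\<close>

lemma two_adic_fact_0: "two_adic_fact 0 = 0"
  by (simp add: two_adic_fact_def)

lemma two_adic_fact_Suc: "two_adic_fact (Suc k) = two_adic_fact k + multiplicity 2 (Suc k)"
proof -
  have "fact (Suc k) = Suc k * (fact k :: nat)" by simp
  then show ?thesis
    unfolding two_adic_fact_def
    using prime_elem_multiplicity_mult_distrib[of "2::nat" "Suc k" "fact k"]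
    by (simp add: fact_nonzero)
qed

lemma two_adic_fact_mono: "m \<le> k \<Longrightarrow> two_adic_fact m \<le> two_adic_fact k"
proof (induction k)
  case (Suc k)
  then show ?case using two_adic_fact_Suc[of k] by (cases "m = Suc k") auto
qed simp

lemma two_adic_fact_odd: "two_adic_fact (Suc (2 * m)) = two_adic_fact (2 * m)"
proof -
  have "multiplicity (2::nat) (Suc (2 * m)) = 0"
    by (rule not_dvd_imp_multiplicity_0) presburger
  then show ?thesis using two_adic_fact_Suc[of "2 * m"] by simp
qed

text \<open>Legendre's formula in recursive form: (2m)! has m more factors 2 than m!.\<close>
lemma two_adic_fact_double: "two_adic_fact (2 * m) = m + two_adic_fact m"
proof (induction m)
  case 0
  then show ?case by (simp add: two_adic_fact_0)
next
  case (Suc m)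
  have "multiplicity (2::nat) (2 * Suc m) = Suc (multiplicity 2 (Suc m))"
    by (rule multiplicity_times_same) auto
  moreover have "2 * Suc m = Suc (Suc (2 * m))" by simp
  ultimately show ?case
    using two_adic_fact_Suc[of "Suc (2 * m)"] two_adic_fact_odd[of m]
      two_adic_fact_Suc[of m] Suc.IH
    by simp
qed

section \<open>The conjectured minimum and its convex companion\<close>

definition adic_sum :: "nat \<Rightarrow> nat" where
  "adic_sum n = (\<Sum>k<n. two_adic_fact k)"

text \<open>The cost h(p) = F(p) + C(p,2) of a subtree with p leaves hanging below a root.\<close>
definition subtree_cost :: "nat \<Rightarrow> nat" where
  "subtree_cost p = adic_sum p + (p choose 2)"

lemma subtree_cost_Suc: "subtree_cost (Suc m) = subtree_cost m + two_adic_fact m + m"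
proof -
  have "(Suc m choose 2) = (m choose 2) + m"
    using binomial_Suc_Suc[of m 1] by (simp only: Suc_1 choose_one add.commute)
  then show ?thesis by (simp add: subtree_cost_def adic_sum_def)
qed

lemma adic_sum_halves: "adic_sum n = subtree_cost ((n + 1) div 2) + subtree_cost (n div 2)"
proof (induction n)
  case 0
  then show ?case by (simp add: adic_sum_def subtree_cost_def)
next
  case (Suc n)
  have step: "adic_sum (Suc n) = adic_sum n + two_adic_fact n"
    by (simp add: adic_sum_def)
  show ?case
  proof (cases "even n")
    case True
    then obtain m where "n = 2 * m" by blast
    then show ?thesis
      using Suc.IH step subtree_cost_Suc[of m] two_adic_fact_double[of m] by simp
  next
    case False
    then obtain m where "n = Suc (2 * m)" using oddE by fastforce
    then show ?thesis
      using Suc.IH step subtree_cost_Suc[of m] two_adic_fact_double[of m]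
        two_adic_fact_odd[of m]
      by simp
  qed
qed

lemma balanced_split_minimal:
  fixes h :: "nat \<Rightarrow> 'a :: ordered_ab_semigroup_add"
  assumes increments: "\<And>p q. q \<le> p \<Longrightarrow> h (Suc q) + h p \<le> h (Suc p) + h q"
  shows "h ((p + q + 1) div 2) + h ((p + q) div 2) \<le> h p + h q"
proof -
  have balance: "h ((p + q + 1) div 2) + h ((p + q) div 2) \<le> h p + h q"
    if "p = q + d" for d p q
    using that
  proof (induction d arbitrary: p q rule: less_induct)
    case (less d)
    show ?case
    proof (cases "d \<le> 1")
      case True
      then consider "d = 0" | "d = 1" by linarith
      then show ?thesis using less.prems by cases (auto simp: add.commute)
    next
      case False
      then obtain p' where p: "p = Suc p'" using less.prems by (cases d) auto
      have closer: "p' = Suc q + (d - 2)" using False less.prems p by simp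
      have "h ((p' + Suc q + 1) div 2) + h ((p' + Suc q) div 2) \<le> h p' + h (Suc q)"
        using less.IH[OF _ closer] False by simp
      also have "\<dots> \<le> h p + h q"
        using increments[of q p'] False less.prems p by (simp add: add.commute)
      finally show ?thesis using p by simp
    qed
  qed
  show ?thesis
  proof (cases "q \<le> p")
    case True
    then show ?thesis using balance[of p q "p - q"] by simp
  next
    case False
    then show ?thesis using balance[of q p "q - p"] by (simp add: add.commute)
  qed
qed

lemma subtree_cost_balanced_split:
  "subtree_cost ((p + q + 1) div 2) + subtree_cost ((p + q) div 2)
     \<le> subtree_cost p + subtree_cost q"
proof (rule balanced_split_minimal)
  fix p q :: nat
  assume "q \<le> p"
  then show "subtree_cost (Suc q) + subtree_cost p \<le> subtree_cost (Suc p) + subtree_cost q"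
    using subtree_cost_Suc[of p] subtree_cost_Suc[of q] two_adic_fact_mono[of q p] by simp
qed

section \<open>The cophenetic index of a tree on its own leaves\<close>

definition ordered_pairs :: "nat set \<Rightarrow> (nat \<times> nat) set" where
  "ordered_pairs S = {(i, j). i \<in> S \<and> j \<in> S \<and> i < j}"

lemma finite_ordered_pairs: "finite S \<Longrightarrow> finite (ordered_pairs S)"
  by (rule finite_subset[of _ "S \<times> S"]) (auto simp: ordered_pairs_def)

text \<open>Pairs i < j in S correspond to the 2-element subsets of S.\<close>
lemma card_ordered_pairs:
  assumes "finite S"
  shows "card (ordered_pairs S) = card S choose 2"
proof -
  have "bij_betw (\<lambda>(i, j). {i, j}) (ordered_pairs S) {A. A \<subseteq> S \<and> card A = 2}"
  proof (rule bij_betwI')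
    fix x y
    assume "x \<in> ordered_pairs S" "y \<in> ordered_pairs S"
    then show "((case x of (i, j) \<Rightarrow> {i, j}) = (case y of (i, j) \<Rightarrow> {i, j})) = (x = y)"
      by (auto simp: ordered_pairs_def doubleton_eq_iff)
  next
    fix x
    assume "x \<in> ordered_pairs S"
    then show "(case x of (i, j) \<Rightarrow> {i, j}) \<in> {A. A \<subseteq> S \<and> card A = 2}"
      by (auto simp: ordered_pairs_def)
  next
    fix A
    assume "A \<in> {A. A \<subseteq> S \<and> card A = 2}"
    then obtain x y where A: "A = {x, y}" "x \<noteq> y" "x \<in> S" "y \<in> S"
      by (auto simp: card_2_iff)
    show "\<exists>z\<in>ordered_pairs S. A = (case z of (i, j) \<Rightarrow> {i, j})"
    proof (cases "x < y")
      case True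
      then show ?thesis using A by (intro bexI[of _ "(x, y)"]) (auto simp: ordered_pairs_def)
    next
      case False
      then show ?thesis using A by (intro bexI[of _ "(y, x)"]) (auto simp: ordered_pairs_def)
    qed
  qed
  then have "card (ordered_pairs S) = card {A. A \<subseteq> S \<and> card A = 2}"
    by (rule bij_betw_same_card)
  then show ?thesis using n_subsets[OF assms] by simp
qed

definition cophenetic :: "btree \<Rightarrow> nat" where
  "cophenetic t = (\<Sum>(i, j) \<in> ordered_pairs (set (leaves t)). lca_depth t i j)"

text \<open>Pairs inside one subtree gain one unit of depth, pairs split at the root contribute 0.\<close>
lemma cophenetic_Node:
  assumes "distinct (leaves (Node l r))"
  shows "cophenetic (Node l r) = cophenetic l + cophenetic r
           + (length (leaves l) choose 2) + (length (leaves r) choose 2)"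
proof -
  let ?L = "set (leaves l)" and ?R = "set (leaves r)"
  let ?f = "\<lambda>(i, j). lca_depth (Node l r) i j"
  have disj: "?L \<inter> ?R = {}" and dl: "distinct (leaves l)" and dr: "distinct (leaves r)"
    using assms by auto
  have fin: "finite (ordered_pairs ?L)" "finite (ordered_pairs ?R)"
    "finite (ordered_pairs (?L \<union> ?R))"
    by (auto intro: finite_ordered_pairs)
  have "cophenetic (Node l r) = sum ?f (ordered_pairs (?L \<union> ?R))"
    by (simp add: cophenetic_def)
  also have "\<dots> = sum ?f (ordered_pairs ?L \<union> ordered_pairs ?R)"
    by (rule sum.mono_neutral_right)
      (use fin disj in \<open>auto simp: ordered_pairs_def\<close>)
  also have "\<dots> = sum ?f (ordered_pairs ?L) + sum ?f (ordered_pairs ?R)"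
    by (rule sum.union_disjoint) (use fin disj in \<open>auto simp: ordered_pairs_def\<close>)
  also have "sum ?f (ordered_pairs ?L) = sum (\<lambda>(i, j). Suc (lca_depth l i j)) (ordered_pairs ?L)"
    by (rule sum.cong) (auto simp: ordered_pairs_def)
  also have "\<dots> = cophenetic l + card (ordered_pairs ?L)"
    by (simp add: cophenetic_def sum_Suc split_def)
  also have "sum ?f (ordered_pairs ?R) = sum (\<lambda>(i, j). Suc (lca_depth r i j)) (ordered_pairs ?R)"
    by (rule sum.cong) (use disj in \<open>auto simp: ordered_pairs_def\<close>)
  also have "\<dots> = cophenetic r + card (ordered_pairs ?R)"
    by (simp add: cophenetic_def sum_Suc split_def)
  finally show ?thesis
    using card_ordered_pairs[of ?L] card_ordered_pairs[of ?R] distinct_card[OF dl] distinct_card[OF dr]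
    by simp
qed

lemma cophenetic_lower_bound:
  "distinct (leaves t) \<Longrightarrow> adic_sum (length (leaves t)) \<le> cophenetic t"
proof (induction t)
  case (Leaf x)
  then show ?case by (simp add: adic_sum_def two_adic_fact_0)
next
  case (Node l r)
  let ?p = "length (leaves l)" and ?q = "length (leaves r)"
  have "adic_sum (length (leaves (Node l r)))
          = subtree_cost ((?p + ?q + 1) div 2) + subtree_cost ((?p + ?q) div 2)"
    using adic_sum_halves[of "?p + ?q"] by simp
  also have "\<dots> \<le> subtree_cost ?p + subtree_cost ?q"
    by (rule subtree_cost_balanced_split)
  also have "\<dots> \<le> cophenetic (Node l r)"
    using Node cophenetic_Node[OF Node.prems] by (auto simp: subtree_cost_def)
  finally show ?case .
qed

lemma leaves_not_Nil: "leaves t \<noteq> []"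
  by (induction t) auto

lemma lca_depth_less_leaves: "lca_depth t i j < length (leaves t)"
proof (induction t)
  case (Node l r)
  then show ?case using leaves_not_Nil[of l] leaves_not_Nil[of r] by simp
qed simp

lemma cophenetic_upper_bound:
  assumes "distinct (leaves t)"
  shows "cophenetic t \<le> (length (leaves t) choose 2) * length (leaves t)"
proof -
  let ?I = "ordered_pairs (set (leaves t))"
  have "(case x of (i, j) \<Rightarrow> lca_depth t i j) \<le> length (leaves t)" for x
    using lca_depth_less_leaves[of t "fst x" "snd x"] by (simp add: split_def)
  then have "cophenetic t \<le> card ?I * length (leaves t)"
    unfolding cophenetic_def by (metis (no_types) sum_bounded_above of_nat_id)
  then show ?thesis
    using card_ordered_pairs[of "set (leaves t)"] distinct_card[OF assms] by simp
qed

section \<open>The balanced tree\<close>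

function balanced :: "nat \<Rightarrow> nat \<Rightarrow> btree" where
  "balanced s n = (if n \<le> 1 then Leaf s
     else Node (balanced s ((n + 1) div 2)) (balanced (s + (n + 1) div 2) (n div 2)))"
  by pat_completeness auto
termination by (relation "measure snd") auto

declare balanced.simps[simp del]

lemma balanced_Node:
  "1 < n \<Longrightarrow> balanced s n
     = Node (balanced s ((n + 1) div 2)) (balanced (s + (n + 1) div 2) (n div 2))"
  by (simp add: balanced.simps)

lemma leaves_balanced: "1 \<le> n \<Longrightarrow> leaves (balanced s n) = [s..<s + n]"
proof (induction s n rule: balanced.induct)
  case (1 s n)
  show ?case
  proof (cases "n \<le> 1")
    case True
    with "1.prems" show ?thesis by (simp add: balanced.simps)
  next
    case False
    have "(n + 1) div 2 + n div 2 = n" by arith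
    then show ?thesis
      using 1 False upt_add_eq_append[of s "s + (n + 1) div 2" "n div 2"]
      by (simp add: balanced_Node add.assoc)
  qed
qed

lemma cophenetic_balanced: "1 \<le> n \<Longrightarrow> cophenetic (balanced s n) = adic_sum n"
proof (induction s n rule: balanced.induct)
  case (1 s n)
  show ?case
  proof (cases "n \<le> 1")
    case True
    with "1.prems" show ?thesis
      by (simp add: balanced.simps cophenetic_def ordered_pairs_def adic_sum_def two_adic_fact_0)
  next
    case False
    let ?l = "balanced s ((n + 1) div 2)" and ?r = "balanced (s + (n + 1) div 2) (n div 2)"
    have "distinct (leaves (Node ?l ?r))"
      using leaves_balanced[OF "1.prems", of s] False by (simp add: balanced_Node)
    moreover have "length (leaves ?l) = (n + 1) div 2" "length (leaves ?r) = n div 2"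
      using False leaves_balanced by auto
    moreover have "cophenetic ?l = adic_sum ((n + 1) div 2)" "cophenetic ?r = adic_sum (n div 2)"
      using "1.IH" False by auto
    ultimately have "cophenetic (balanced s n) = subtree_cost ((n + 1) div 2) + subtree_cost (n div 2)"
      using cophenetic_Node[of ?l ?r] False by (simp add: balanced_Node subtree_cost_def)
    then show ?thesis using adic_sum_halves[of n] by simp
  qed
qed

lemma binary_phylo_leaves:
  assumes "binary_phylo t n"
  shows "distinct (leaves t)" and "length (leaves t) = n"
proof -
  show dist: "distinct (leaves t)" using assms by (simp add: binary_phylo_def)
  have "card (set (leaves t)) = n" using assms by (simp add: binary_phylo_def)
  then show "length (leaves t) = n" using distinct_card[OF dist] by simp
qed

lemma total_cophenetic_eq:
  assumes "binary_phylo t n"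
  shows "total_cophenetic t n = cophenetic t"
proof -
  have "ordered_pairs (set (leaves t)) = {(i, j). 1 \<le> i \<and> i < j \<and> j \<le> n}"
    using assms unfolding binary_phylo_def ordered_pairs_def by auto
  then show ?thesis unfolding total_cophenetic_def cophenetic_def by simp
qed

lemma binary_phylo_balanced: "1 \<le> n \<Longrightarrow> binary_phylo (balanced 1 n) n"
  using leaves_balanced[of n 1] by (auto simp: binary_phylo_def)

theorem mainTheorem12:
  fixes n :: nat
  assumes "n \<ge> 1"
  shows "min_cophenetic n = (\<Sum>k = 0..n-1. two_adic_fact k)"
proof -
  let ?values = "{total_cophenetic t n | t. binary_phylo t n}"
  have "{0..n-1} = {..<n}" using assms by auto
  then have target: "(\<Sum>k = 0..n-1. two_adic_fact k) = adic_sum n"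
    by (simp add: adic_sum_def)
  have attained: "adic_sum n \<in> ?values"
    using binary_phylo_balanced[OF assms] total_cophenetic_eq cophenetic_balanced[OF assms]
    by (metis (mono_tags, lifting) mem_Collect_eq)
  have lower: "adic_sum n \<le> v" if v_value: "v \<in> ?values" for v
  proof -
    obtain t where t: "binary_phylo t n" "v = total_cophenetic t n" using v_value by blast
    then show ?thesis
      using cophenetic_lower_bound[of t] binary_phylo_leaves[OF t(1)] total_cophenetic_eq[OF t(1)]
      by simp
  qed
  have "?values \<subseteq> {..(n choose 2) * n}"
    using cophenetic_upper_bound binary_phylo_leaves total_cophenetic_eq by fastforce
  then have "finite ?values" by (rule finite_subset) simp
  then show ?thesis
    unfolding min_cophenetic_def target by (rule Min_eqI[OF _ lower attained])
qed

end
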